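(* Let a graph grammar (a finite set of substitutions $Sub_i=(\Gamma_i,\Gamma_i',V_{i,0},\varphi_i)$, $i=1,\dots,r$) be local, locally bounded and respect connectivity, and let $n$ be sufficiently large, with $G(0)\in GC_n$. Then the grammar is metrically bounded from above: there exists a constant $C=C(n)>0$ such that for each spin graph $\alpha=(G,s)$ (with $G\in GC_n$), each pair of vertices $x,y\in V(G)$ and each transformation $T=T(Sub_i,\psi)$ applicable to $\alpha$, $$d_{TG}(x,y)\le d_G(x,y)+C,$$ where $TG$ denotes the graph of $T\alpha$.
   Context: Graphs are non-directed, connected, with at most one edge between any two vertices and every vertex of finite degree. $GF_n$ (resp. $GC_n$) is the set of finite (resp. countable) such graphs in which every vertex has degree at most $n$. $d_G(x,y)$ is the graph distance (minimal number of edges of a path from $x$ to $y$) in $G$. A spin graph is a pair $\alpha=(G,s)$ with $s:V(G)\to S$ for a fixed alphabet $S$. A substitution rule $Sub=(\Gamma,\Gamma',V_0,\varphi)$ consists of two finite spin graphs $\Gamma,\Gamma'$, a subset $V_0\subset V(\Gamma)$ and a map $\varphi:V_0\to V(\Gamma')$ ($V_0$ and $\Gamma'$ may be empty). Given an isomorphism of spin graphs $\psi:\Gamma\to\Gamma_1$ onto a spin subgraph $\Gamma_1$ of $\alpha$, the transformation $T(Sub,\psi)\alpha$ is obtained by: taking the disjoint union of $\alpha$ and $\Gamma'$, deleting all links of $\Gamma_1$, deleting all vertices of $\psi(V(\Gamma))\setminus\psi(V_0)$ together with their incident links, and identifying each $\psi(v)$, $v\in V_0$, with $\varphi(v)\in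 V(\Gamma')$; spins outside $\Gamma_1$ are inherited from $\alpha$ and on $V(\Gamma')$ from $\Gamma'$. A graph grammar is a finite set of substitutions; it is local if every $\Gamma_i$ is connected; it is locally bounded if, for all sufficiently large $n$, the sets $GF_n$ and $GC_n$ are invariant under all its substitutions; it respects connectivity if $T(Sub_i,\psi)\alpha$ is connected whenever $\alpha$ is connected, for all possible $i,\psi$. *)

theory Defs
  imports Main "HOL-Library.Extended_Nat" "HOL-Library.Countable_Set"
begin

record ('a, 's) sgraph =
  verts :: "'a set"
  adj   :: "('a \<times> 'a) set"
  spin  :: "'a \<Rightarrow> 's"

definition simple :: "('a, 's) sgraph \<Rightarrow> bool" where
  "simple G \<longleftrightarrow> adj G \<subseteq> verts G \<times> verts G \<and> sym (adj G) \<and> irrefl (adj G)"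

definition connected_g :: "('a, 's) sgraph \<Rightarrow> bool" where
  "connected_g G \<longleftrightarrow> (\<forall>x\<in>verts G. \<forall>y\<in>verts G. (x, y) \<in> (adj G)\<^sup>*)"

definition nbrs :: "('a, 's) sgraph \<Rightarrow> 'a \<Rightarrow> 'a set" where
  "nbrs G x = {y. (x, y) \<in> adj G}"

definition deg :: "('a, 's) sgraph \<Rightarrow> 'a \<Rightarrow> nat" where
  "deg G x = card (nbrs G x)"

definition is_graph :: "('a, 's) sgraph \<Rightarrow> bool" where
  "is_graph G \<longleftrightarrow> simple G \<and> connected_g G \<and> (\<forall>x\<in>verts G. finite (nbrs G x))"

definition in_GF :: "nat \<Rightarrow> ('a, 's) sgraph \<Rightarrow> bool" where
  "in_GF n G \<longleftrightarrow> is_graph G \<and> finite (verts G) \<and> (\<forall>x\<in>verts G. deg G x \<le> n)"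

definition in_GC :: "nat \<Rightarrow> ('a, 's) sgraph \<Rightarrow> bool" where
  "in_GC n G \<longleftrightarrow> is_graph G \<and> countable (verts G) \<and> (\<forall>x\<in>verts G. deg G x \<le> n)"

text \<open>Graph distance (minimal number of edges of a path), \<open>\<infinity>\<close> if there is no path.\<close>
definition gdist :: "('a, 's) sgraph \<Rightarrow> 'a \<Rightarrow> 'a \<Rightarrow> enat" where
  "gdist G x y = (INF k \<in> {k. (x, y) \<in> adj G ^^ k}. enat k)"

record ('g, 'b, 's) subst =
  Gam  :: "('g, 's) sgraph"
  Gam' :: "('b, 's) sgraph"
  V0   :: "'g set"
  phi  :: "'g \<Rightarrow> 'b"

definition valid_subst :: "('g, 'b, 's) subst \<Rightarrow> bool" where
  "valid_subst Sub \<longleftrightarrow>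
     simple (Gam Sub) \<and> finite (verts (Gam Sub)) \<and>
     simple (Gam' Sub) \<and> finite (verts (Gam' Sub)) \<and>
     V0 Sub \<subseteq> verts (Gam Sub) \<and> phi Sub ` V0 Sub \<subseteq> verts (Gam' Sub)"

definition spin_subgraph :: "('a, 's) sgraph \<Rightarrow> ('a, 's) sgraph \<Rightarrow> bool" where
  "spin_subgraph H G \<longleftrightarrow> verts H \<subseteq> verts G \<and> adj H \<subseteq> adj G \<and>
     (\<forall>x\<in>verts H. spin H x = spin G x)"

definition spin_iso :: "('g \<Rightarrow> 'a) \<Rightarrow> ('g, 's) sgraph \<Rightarrow> ('a, 's) sgraph \<Rightarrow> bool" where
  "spin_iso \<psi> H K \<longleftrightarrow> bij_betw \<psi> (verts H) (verts K) \<and>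
     (\<forall>u\<in>verts H. \<forall>v\<in>verts H. ((u, v) \<in> adj H \<longleftrightarrow> (\<psi> u, \<psi> v) \<in> adj K)) \<and>
     (\<forall>u\<in>verts H. spin K (\<psi> u) = spin H u)"

definition img_graph :: "('g \<Rightarrow> 'a) \<Rightarrow> ('g, 's) sgraph \<Rightarrow> ('a, 's) sgraph \<Rightarrow> ('a, 's) sgraph" where
  "img_graph \<psi> H G = \<lparr>verts = \<psi> ` verts H, adj = {(\<psi> u, \<psi> v) | u v. (u, v) \<in> adj H},
     spin = spin G\<rparr>"

definition applicable :: "('g, 'b, 's) subst \<Rightarrow> ('g \<Rightarrow> 'a) \<Rightarrow> ('a, 's) sgraph \<Rightarrow> bool" where
  "applicable Sub \<psi> G \<longleftrightarrow>
     (\<exists>\<Gamma>\<^sub>1. spin_subgraph \<Gamma>\<^sub>1 G \<and> spin_iso \<psi> (Gam Sub) \<Gamma>\<^sub>1)"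

definition deleted :: "('g, 'b, 's) subst \<Rightarrow> ('g \<Rightarrow> 'a) \<Rightarrow> 'a set" where
  "deleted Sub \<psi> = \<psi> ` verts (Gam Sub) - \<psi> ` V0 Sub"

definition pre_verts :: "('g, 'b, 's) subst \<Rightarrow> ('g \<Rightarrow> 'a) \<Rightarrow> ('a, 's) sgraph \<Rightarrow> ('a + 'b) set" where
  "pre_verts Sub \<psi> G = Inl ` (verts G - deleted Sub \<psi>) \<union> Inr ` verts (Gam' Sub)"

definition pre_adj :: "('g, 'b, 's) subst \<Rightarrow> ('g \<Rightarrow> 'a) \<Rightarrow> ('a, 's) sgraph \<Rightarrow> (('a + 'b) \<times> ('a + 'b)) set" where
  "pre_adj Sub \<psi> G =
     {(Inl a, Inl b) | a b. (a, b) \<in> adj G - adj (img_graph \<psi> (Gam Sub) G)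
                            \<and> a \<notin> deleted Sub \<psi> \<and> b \<notin> deleted Sub \<psi>}
     \<union> {(Inr a, Inr b) | a b. (a, b) \<in> adj (Gam' Sub)}"

definition glue_rel :: "('g, 'b, 's) subst \<Rightarrow> ('g \<Rightarrow> 'a) \<Rightarrow> ('a, 's) sgraph \<Rightarrow> (('a + 'b) \<times> ('a + 'b)) set" where
  "glue_rel Sub \<psi> G =
     (let R = {(Inl (\<psi> v), Inr (phi Sub v)) | v. v \<in> V0 Sub}
      in (R \<union> R\<inverse> \<union> Id_on (pre_verts Sub \<psi> G))\<^sup>*)"

text \<open>The vertex of \<open>T\<alpha>\<close> corresponding to a (non-deleted) vertex \<open>x\<close> of \<open>\<alpha>\<close>.\<close>
definition cls :: "('g, 'b, 's) subst \<Rightarrow> ('g \<Rightarrow> 'a) \<Rightarrow> ('a, 's) sgraph \<Rightarrow> 'a \<Rightarrow> ('a + 'b) set" where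
  "cls Sub \<psi> G x = glue_rel Sub \<psi> G `` {Inl x}"

definition transform :: "('g, 'b, 's) subst \<Rightarrow> ('g \<Rightarrow> 'a) \<Rightarrow> ('a, 's) sgraph \<Rightarrow> (('a + 'b) set, 's) sgraph" where
  "transform Sub \<psi> G =
     (let Vs = pre_verts Sub \<psi> G // glue_rel Sub \<psi> G
      in \<lparr>verts = Vs,
          adj = {(A, B). A \<in> Vs \<and> B \<in> Vs \<and> (\<exists>a\<in>A. \<exists>b\<in>B. (a, b) \<in> pre_adj Sub \<psi> G)},
          spin = (\<lambda>A. if \<exists>w. Inr w \<in> A then spin (Gam' Sub) (SOME w. Inr w \<in> A)
                      else spin G (SOME a. Inl a \<in> A))\<rparr>)"

text \<open>A graph grammar is a finite list of substitutions; graphs \<open>\<alpha>\<close> are countable, so we take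
  their vertices in \<open>nat\<close>.\<close>

definition local_grammar :: "('g, 'b, 's) subst list \<Rightarrow> bool" where
  "local_grammar subs \<longleftrightarrow> (\<forall>i<length subs. connected_g (Gam (subs ! i)))"

definition locally_bounded :: "('g, 'b, 's) subst list \<Rightarrow> bool" where
  "locally_bounded subs \<longleftrightarrow> (\<exists>N. \<forall>n\<ge>N. \<forall>i<length subs. \<forall>\<psi> (G :: (nat, 's) sgraph).
     applicable (subs ! i) \<psi> G \<longrightarrow>
       (in_GF n G \<longrightarrow> in_GF n (transform (subs ! i) \<psi> G)) \<and>
       (in_GC n G \<longrightarrow> in_GC n (transform (subs ! i) \<psi> G)))"

definition respects_connectivity :: "('g, 'b, 's) subst list \<Rightarrow> bool" where
  "respects_connectivity subs \<longleftrightarrow> (\<forall>i<length subs. \<forall>\<psi> (G :: (nat, 's) sgraph).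
     is_graph G \<and> applicable (subs ! i) \<psi> G \<longrightarrow> connected_g (transform (subs ! i) \<psi> G))"

end

theory Submission
  imports Defs
begin

text \<open>
  Only edges of \<open>G\<close> touching the image \<open>\<psi>(V(\<Gamma>))\<close> of the substitution are affected by it.
  A shortest path from \<open>x\<close> to \<open>y\<close> therefore survives up to its first and last visit of the
  closed neighbourhood \<open>B\<close> of that image, and it suffices to bound the distance in \<open>T\<alpha>\<close> between
  any two surviving vertices of \<open>B\<close>. The subgraph induced on \<open>B\<close> is connected (because \<open>\<Gamma>\<close> is),
  has at most \<open>|V(\<Gamma>)|(n+1)\<close> vertices, and the substitution applies to it; since the grammar
  respects connectivity, its transform is a connected graph with at most
  \<open>|V(\<Gamma>)|(n+1) + |V(\<Gamma>')|\<close> vertices, and it embeds into \<open>T\<alpha>\<close>.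
\<close>

lemma gdist_le_relpow:
  assumes "(x, y) \<in> adj G ^^ k"
  shows "gdist G x y \<le> enat k"
  unfolding gdist_def by (rule INF_lower) (use assms in fastforce)

lemma gdist_attained:
  assumes "gdist G x y \<noteq> \<infinity>"
  obtains k where "gdist G x y = enat k" "(x, y) \<in> adj G ^^ k"
proof -
  define S where "S = {k. (x, y) \<in> adj G ^^ k}"
  have gdist_S: "gdist G x y = (INF k\<in>S. enat k)" unfolding gdist_def S_def ..
  have "S \<noteq> {}" using assms unfolding gdist_S by (auto simp: top_enat_def)
  then have kS: "(LEAST k. k \<in> S) \<in> S" by (auto intro: LeastI)
  have "(INF k\<in>S. enat k) = enat (LEAST k. k \<in> S)"
  proof (rule antisym)
    show "enat (LEAST k. k \<in> S) \<le> (INF k\<in>S. enat k)"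
      by (rule INF_greatest) (simp add: Least_le)
  qed (rule INF_lower[OF kS])
  then show ?thesis using that kS gdist_S unfolding S_def by auto
qed

lemma gdist_triangle: "gdist G x z \<le> gdist G x y + gdist G y z"
proof (cases "gdist G x y = \<infinity> \<or> gdist G y z = \<infinity>")
  case False
  then obtain k l where "gdist G x y = enat k" "(x, y) \<in> adj G ^^ k"
    and "gdist G y z = enat l" "(y, z) \<in> adj G ^^ l"
    by (metis gdist_attained)
  then have "(x, z) \<in> adj G ^^ (k + l)" by (auto simp: relpow_add)
  then show ?thesis using \<open>gdist G x y = enat k\<close> \<open>gdist G y z = enat l\<close>
    by (auto dest: gdist_le_relpow)
qed auto

lemma relpow_image:
  assumes "\<And>u v. (u, v) \<in> R \<Longrightarrow> (f u, f v) \<in> S" "(x, y) \<in> R ^^ k"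
  shows "(f x, f y) \<in> S ^^ k"
  using assms(2) by (induction k arbitrary: y) (auto intro: assms(1))

lemma gdist_mono:
  assumes "adj H \<subseteq> adj G"
  shows "gdist G x y \<le> gdist H x y"
  unfolding gdist_def
  by (rule INF_mono) (use relpow_image[where R = "adj H" and S = "adj G" and f = id] assms in fastforce)

lemma gdist_le_card_squared:
  assumes adj_sub: "adj G \<subseteq> verts G \<times> verts G"
    and "connected_g G" "finite (verts G)" "x \<in> verts G" "y \<in> verts G"
  shows "gdist G x y \<le> enat (card (verts G) ^ 2)"
proof -
  have fin: "finite (adj G)" using finite_subset[OF adj_sub] assms(3) by blast
  have "(x, y) \<in> (adj G)\<^sup>*" using assms(2,4,5) unfolding connected_g_def by blast
  then obtain m where m: "m \<le> card (adj G)" "(x, y) \<in> adj G ^^ m"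
    using rtrancl_finite_eq_relpow[OF fin] by blast
  have "card (adj G) \<le> card (verts G \<times> verts G)"
    using adj_sub assms(3) by (intro card_mono) auto
  then have "enat m \<le> enat (card (verts G) ^ 2)"
    using m(1) by (simp add: card_cartesian_product power2_eq_square)
  with gdist_le_relpow[OF m(2)] show ?thesis by (rule order_trans)
qed

lemma relpow_Restr_endpoints:
  "(x, y) \<in> Restr R A ^^ k \<Longrightarrow> x = y \<or> x \<in> A \<and> y \<in> A"
  by (induction k arbitrary: y) auto

lemma relpow_avoiding_or_through_nbhd:
  fixes R :: "('a \<times> 'a) set" and P :: "'a set"
  defines "A \<equiv> Restr R (- P)" and "B \<equiv> P \<union> R `` P"
  assumes "sym R" "(x, y) \<in> R ^^ k"
  shows "(x, y) \<in> A ^^ k \<or>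
    (\<exists>a\<in>B. \<exists>b\<in>B. \<exists>i j. i + j \<le> k \<and> (x, a) \<in> A ^^ i \<and> (b, y) \<in> A ^^ j)"
  using assms(4)
proof (induction k arbitrary: y)
  case (Suc k)
  then obtain z where xz: "(x, z) \<in> R ^^ k" and zy: "(z, y) \<in> R" by auto
  have yz: "(y, z) \<in> R" using \<open>sym R\<close> zy by (rule symD)
  have near: "z \<in> B \<and> y \<in> B" if "z \<in> P \<or> y \<in> P"
    using that zy yz unfolding B_def by blast
  from Suc.IH[OF xz] show ?case
  proof
    assume x_z: "(x, z) \<in> A ^^ k"
    show ?case
    proof (cases "z \<in> P \<or> y \<in> P")
      case True
      then show ?thesis using near x_z
        by (intro disjI2 bexI[of _ z] bexI[of _ y] exI[of _ k] exI[of _ 0]) auto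
    next
      case False
      then have "(z, y) \<in> A" using zy unfolding A_def by blast
      then show ?thesis using x_z by auto
    qed
  next
    assume "\<exists>a\<in>B. \<exists>b\<in>B. \<exists>i j. i + j \<le> k \<and> (x, a) \<in> A ^^ i \<and> (b, z) \<in> A ^^ j"
    then obtain a b i j where ab: "a \<in> B" "b \<in> B" "i + j \<le> k" "(x, a) \<in> A ^^ i"
      and b_z: "(b, z) \<in> A ^^ j" by blast
    show ?case
    proof (cases "z \<in> P \<or> y \<in> P")
      case True
      then show ?thesis using near ab
        by (intro disjI2 bexI[of _ a] bexI[of _ y] exI[of _ i] exI[of _ 0]) auto
    next
      case False
      then have "(b, y) \<in> A ^^ Suc j" using zy b_z unfolding A_def by auto
      then show ?thesis using ab
        by (intro disjI2 bexI[of _ a] bexI[of _ b] exI[of _ i] exI[of _ "Suc j"]) auto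
    qed
  qed
qed simp

definition induced :: "('a, 's) sgraph \<Rightarrow> 'a set \<Rightarrow> ('a, 's) sgraph" where
  "induced G B = G\<lparr>verts := B, adj := adj G \<inter> B \<times> B\<rparr>"

definition closed_nbhd :: "('a, 's) sgraph \<Rightarrow> 'a set \<Rightarrow> 'a set" where
  "closed_nbhd G P = P \<union> adj G `` P"

lemma closed_nbhd_subset_verts:
  "simple G \<Longrightarrow> P \<subseteq> verts G \<Longrightarrow> closed_nbhd G P \<subseteq> verts G"
  unfolding closed_nbhd_def simple_def by blast

lemma is_graph_induced_closed_nbhd:
  assumes G: "is_graph G" and P: "P \<subseteq> verts G"
    and P_conn: "\<And>p q. p \<in> P \<Longrightarrow> q \<in> P \<Longrightarrow> (p, q) \<in> (adj G \<inter> P \<times> P)\<^sup>*"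
  shows "is_graph (induced G (closed_nbhd G P))"
proof -
  define B where "B = closed_nbhd G P"
  define E where "E = adj G \<inter> B \<times> B"
  have simple: "simple G" using G unfolding is_graph_def by blast
  then have "sym (adj G)" "irrefl (adj G)" unfolding simple_def by auto
  then have simple_H: "simple (induced G B)"
    unfolding simple_def induced_def sym_def irrefl_def by auto
  have PB: "P \<subseteq> B" unfolding B_def closed_nbhd_def by blast
  have PP_E: "adj G \<inter> P \<times> P \<subseteq> E" using PB unfolding E_def by blast
  have to_P: "\<exists>p\<in>P. (v, p) \<in> E\<^sup>* \<and> (p, v) \<in> E\<^sup>*" if v: "v \<in> B" for v
  proof (cases "v \<in> P")
    case False
    then obtain p where p: "p \<in> P" "(p, v) \<in> adj G" using v unfolding B_def closed_nbhd_def by blast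
    then have "(v, p) \<in> adj G" using \<open>sym (adj G)\<close> by (blast intro: symD)
    then show ?thesis using p PB v unfolding E_def by blast
  qed auto
  have "(v, w) \<in> E\<^sup>*" if "v \<in> B" "w \<in> B" for v w
  proof -
    obtain p q where "p \<in> P" "q \<in> P" "(v, p) \<in> E\<^sup>*" "(q, w) \<in> E\<^sup>*"
      using to_P \<open>v \<in> B\<close> \<open>w \<in> B\<close> by blast
    moreover have "(p, q) \<in> E\<^sup>*"
      using P_conn[OF \<open>p \<in> P\<close> \<open>q \<in> P\<close>] rtrancl_mono[OF PP_E] by blast
    ultimately show ?thesis by (meson rtrancl_trans)
  qed
  then have "connected_g (induced G B)" unfolding connected_g_def induced_def E_def by simp
  moreover have "finite (nbrs (induced G B) v)" if "v \<in> B" for v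
  proof -
    have "v \<in> verts G" using that closed_nbhd_subset_verts[OF simple P] unfolding B_def by blast
    then have "finite (nbrs G v)" using G unfolding is_graph_def by blast
    then show ?thesis by (rule finite_subset[rotated]) (auto simp: nbrs_def induced_def)
  qed
  ultimately show ?thesis using simple_H unfolding is_graph_def B_def by (simp add: induced_def)
qed

lemma card_closed_nbhd_le:
  assumes G: "in_GC n G" and P: "finite P" "P \<subseteq> verts G"
  shows "finite (closed_nbhd G P)" "card (closed_nbhd G P) \<le> card P * (n + 1)"
proof -
  have nbrs: "finite (nbrs G p)" "card (nbrs G p) \<le> n" if "p \<in> P" for p
    using G that P(2) unfolding in_GC_def is_graph_def deg_def by auto
  have eq: "closed_nbhd G P = P \<union> (\<Union>p\<in>P. nbrs G p)"
    unfolding closed_nbhd_def nbrs_def by blast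
  show "finite (closed_nbhd G P)" unfolding eq using P(1) nbrs by simp
  have "card (closed_nbhd G P) \<le> card P + card (\<Union>p\<in>P. nbrs G p)"
    unfolding eq by (rule card_Un_le)
  also have "card (\<Union>p\<in>P. nbrs G p) \<le> (\<Sum>p\<in>P. card (nbrs G p))" by (rule card_UN_le[OF P(1)])
  also have "\<dots> \<le> card P * n" using sum_mono[of P _ "\<lambda>_. n"] nbrs by simp
  finally show "card (closed_nbhd G P) \<le> card P * (n + 1)" by simp
qed

lemma applicable_image_subset_verts:
  "applicable Sub \<psi> G \<Longrightarrow> \<psi> ` verts (Gam Sub) \<subseteq> verts G"
  unfolding applicable_def spin_subgraph_def spin_iso_def bij_betw_def by blast

lemma applicable_induced:
  assumes "applicable Sub \<psi> G" "\<psi> ` verts (Gam Sub) \<subseteq> B"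
  shows "applicable Sub \<psi> (induced G B)"
proof -
  obtain \<Gamma>\<^sub>1 where sub: "spin_subgraph \<Gamma>\<^sub>1 G" and iso: "spin_iso \<psi> (Gam Sub) \<Gamma>\<^sub>1"
    using assms(1) unfolding applicable_def by blast
  define P where "P = \<psi> ` verts (Gam Sub)"
  have P: "verts \<Gamma>\<^sub>1 = P" using iso unfolding spin_iso_def bij_betw_def P_def by blast
  define \<Gamma>\<^sub>2 where "\<Gamma>\<^sub>2 = \<Gamma>\<^sub>1\<lparr>adj := adj \<Gamma>\<^sub>1 \<inter> P \<times> P\<rparr>"
  have "spin_subgraph \<Gamma>\<^sub>2 (induced G B)"
    using sub assms(2) P unfolding spin_subgraph_def \<Gamma>\<^sub>2_def induced_def P_def by auto
  moreover have "spin_iso \<psi> (Gam Sub) \<Gamma>\<^sub>2"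
    using iso P unfolding spin_iso_def \<Gamma>\<^sub>2_def P_def by auto
  ultimately show ?thesis unfolding applicable_def by blast
qed

lemma applicable_image_connected:
  assumes "valid_subst Sub" "connected_g (Gam Sub)" "applicable Sub \<psi> G"
    and "u \<in> verts (Gam Sub)" "v \<in> verts (Gam Sub)"
  shows "(\<psi> u, \<psi> v) \<in> (adj G \<inter> \<psi> ` verts (Gam Sub) \<times> \<psi> ` verts (Gam Sub))\<^sup>*"
proof -
  obtain \<Gamma>\<^sub>1 where sub: "spin_subgraph \<Gamma>\<^sub>1 G" and iso: "spin_iso \<psi> (Gam Sub) \<Gamma>\<^sub>1"
    using assms(3) unfolding applicable_def by blast
  have adj_Gam: "adj (Gam Sub) \<subseteq> verts (Gam Sub) \<times> verts (Gam Sub)"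
    using assms(1) unfolding valid_subst_def simple_def by blast
  have edge: "(\<psi> w, \<psi> z) \<in> adj G \<inter> \<psi> ` verts (Gam Sub) \<times> \<psi> ` verts (Gam Sub)"
    if "(w, z) \<in> adj (Gam Sub)" for w z
    using that adj_Gam iso sub unfolding spin_iso_def spin_subgraph_def by blast
  have "(u, v) \<in> (adj (Gam Sub))\<^sup>*" using assms(2,4,5) unfolding connected_g_def by blast
  then show ?thesis by (induction rule: rtrancl_induct) (auto intro: rtrancl_into_rtrancl[OF _ edge])
qed

text \<open>The identity part of \<open>glue_rel\<close> is absorbed by the reflexive closure, so gluing,
  and hence \<open>cls\<close>, does not depend on the host graph.\<close>
lemma glue_rel_eq:
  "glue_rel Sub \<psi> G = ({(Inl (\<psi> v), Inr (phi Sub v)) | v. v \<in> V0 Sub} \<union>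
      {(Inl (\<psi> v), Inr (phi Sub v)) | v. v \<in> V0 Sub}\<inverse>)\<^sup>*"
proof -
  define S where "S = {(Inl (\<psi> v), Inr (phi Sub v)) | v. v \<in> V0 Sub} \<union>
      {(Inl (\<psi> v), Inr (phi Sub v)) | v. v \<in> V0 Sub}\<inverse>"
  have "(S \<union> Id_on (pre_verts Sub \<psi> G))\<^sup>* = S\<^sup>*"
  proof
    have "(S \<union> Id_on (pre_verts Sub \<psi> G))\<^sup>* \<subseteq> (S\<^sup>*)\<^sup>*" by (rule rtrancl_mono) auto
    then show "(S \<union> Id_on (pre_verts Sub \<psi> G))\<^sup>* \<subseteq> S\<^sup>*" by simp
  qed (rule rtrancl_mono, auto)
  then show ?thesis unfolding glue_rel_def S_def Let_def by (simp add: sup_assoc)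
qed

lemma cls_indep: "cls Sub \<psi> H x = cls Sub \<psi> G x"
  unfolding cls_def glue_rel_eq ..

lemma Inl_in_cls: "Inl x \<in> cls Sub \<psi> G x"
  unfolding cls_def glue_rel_eq by auto

lemma cls_in_verts_transform:
  "x \<in> verts G - deleted Sub \<psi> \<Longrightarrow> cls Sub \<psi> G x \<in> verts (transform Sub \<psi> G)"
  unfolding transform_def Let_def cls_def quotient_def pre_verts_def by auto

lemma adj_transform_mono:
  assumes "verts H \<subseteq> verts G" "adj H \<subseteq> adj G"
  shows "adj (transform Sub \<psi> H) \<subseteq> adj (transform Sub \<psi> G)"
proof -
  have "pre_verts Sub \<psi> H // glue_rel Sub \<psi> H \<subseteq> pre_verts Sub \<psi> G // glue_rel Sub \<psi> G"
    using assms unfolding glue_rel_eq[of Sub \<psi> H] glue_rel_eq[of Sub \<psi> G] quotient_def pre_verts_def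
    by auto
  moreover have "pre_adj Sub \<psi> H \<subseteq> pre_adj Sub \<psi> G"
    using assms unfolding pre_adj_def img_graph_def by auto
  ultimately show ?thesis unfolding transform_def Let_def by auto
qed

lemma edge_in_transform:
  assumes "valid_subst Sub" "(x, y) \<in> adj G"
    and "x \<in> verts G - deleted Sub \<psi>" "y \<in> verts G - deleted Sub \<psi>"
    and "x \<notin> \<psi> ` verts (Gam Sub) \<or> y \<notin> \<psi> ` verts (Gam Sub)"
  shows "(cls Sub \<psi> G x, cls Sub \<psi> G y) \<in> adj (transform Sub \<psi> G)"
proof -
  have "adj (Gam Sub) \<subseteq> verts (Gam Sub) \<times> verts (Gam Sub)"
    using assms(1) unfolding valid_subst_def simple_def by auto
  then have "(Inl x, Inl y) \<in> pre_adj Sub \<psi> G"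
    using assms(2-5) unfolding pre_adj_def img_graph_def by auto
  then show ?thesis
    using cls_in_verts_transform[OF assms(3)] cls_in_verts_transform[OF assms(4)] Inl_in_cls
    unfolding transform_def Let_def by fastforce
qed

lemma card_verts_transform_le:
  fixes Sub :: "('g, 'b, 's) subst" and H :: "('a, 's) sgraph"
  assumes "valid_subst Sub" "finite (verts H)"
  shows "finite (verts (transform Sub \<psi> H))"
    "card (verts (transform Sub \<psi> H)) \<le> card (verts H) + card (verts (Gam' Sub))"
proof -
  have fin: "finite (verts (Gam' Sub))" using assms(1) unfolding valid_subst_def by blast
  have eq: "verts (transform Sub \<psi> H) = (\<lambda>v. glue_rel Sub \<psi> H `` {v}) ` pre_verts Sub \<psi> H"
    unfolding transform_def Let_def quotient_def by auto
  have fin_pre: "finite (pre_verts Sub \<psi> H)" unfolding pre_verts_def using assms(2) fin by simp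
  then show "finite (verts (transform Sub \<psi> H))" unfolding eq by simp
  have "card (verts (transform Sub \<psi> H)) \<le> card (pre_verts Sub \<psi> H)"
    unfolding eq by (rule card_image_le[OF fin_pre])
  also have "\<dots> \<le> card (Inl ` (verts H - deleted Sub \<psi>) :: ('a + 'b) set)
      + card (Inr ` verts (Gam' Sub) :: ('a + 'b) set)"
    unfolding pre_verts_def by (rule card_Un_le)
  also have "\<dots> \<le> card (verts H) + card (verts (Gam' Sub))"
    using assms(2) fin by (intro add_mono) (auto simp: card_image card_mono)
  finally show "card (verts (transform Sub \<psi> H)) \<le> card (verts H) + card (verts (Gam' Sub))" .
qed

lemma gdist_transform_avoiding_walk:
  assumes "valid_subst Sub" "simple G"
    and "(x, y) \<in> Restr (adj G) (- \<psi> ` verts (Gam Sub)) ^^ k"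
  shows "gdist (transform Sub \<psi> G) (cls Sub \<psi> G x) (cls Sub \<psi> G y) \<le> enat k"
proof -
  have "(cls Sub \<psi> G u, cls Sub \<psi> G v) \<in> adj (transform Sub \<psi> G)"
    if "(u, v) \<in> Restr (adj G) (- \<psi> ` verts (Gam Sub))" for u v
    using that assms(2) by (intro edge_in_transform[OF assms(1)])
      (auto simp: simple_def deleted_def)
  then show ?thesis
    by (intro gdist_le_relpow relpow_image[OF _ assms(3)])
qed

lemma card_transform_closed_nbhd_le:
  assumes Sub: "valid_subst Sub" and G: "in_GC n G" "applicable Sub \<psi> G"
  defines "TH \<equiv> transform Sub \<psi> (induced G (closed_nbhd G (\<psi> ` verts (Gam Sub))))"
  shows "finite (verts TH)"
    "card (verts TH) \<le> card (verts (Gam Sub)) * (n + 1) + card (verts (Gam' Sub))"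
proof -
  define P where "P = \<psi> ` verts (Gam Sub)"
  define B where "B = closed_nbhd G P"
  have PG: "P \<subseteq> verts G" unfolding P_def by (rule applicable_image_subset_verts[OF G(2)])
  have finP: "finite P" "card P \<le> card (verts (Gam Sub))"
    using Sub unfolding P_def valid_subst_def by (auto intro: card_image_le)
  have finB: "finite B" unfolding B_def by (rule card_closed_nbhd_le(1)[OF G(1) finP(1) PG])
  have "card B \<le> card P * (n + 1)"
    unfolding B_def by (rule card_closed_nbhd_le(2)[OF G(1) finP(1) PG])
  also have "\<dots> \<le> card (verts (Gam Sub)) * (n + 1)" using finP(2) by (rule mult_le_mono1)
  finally have cardB: "card B \<le> card (verts (Gam Sub)) * (n + 1)" .
  have TH: "TH = transform Sub \<psi> (induced G B)" unfolding TH_def B_def P_def ..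
  have H_verts: "verts (induced G B) = B" unfolding induced_def by simp
  show "finite (verts TH)"
    using card_verts_transform_le(1)[OF Sub, of "induced G B"] finB H_verts unfolding TH by simp
  have "card (verts TH) \<le> card B + card (verts (Gam' Sub))"
    using card_verts_transform_le(2)[OF Sub, of "induced G B"] finB H_verts unfolding TH by simp
  also have "\<dots> \<le> card (verts (Gam Sub)) * (n + 1) + card (verts (Gam' Sub))"
    using cardB by (rule add_right_mono)
  finally show "card (verts TH) \<le> card (verts (Gam Sub)) * (n + 1) + card (verts (Gam' Sub))" .
qed

definition stretch_bound :: "nat \<Rightarrow> ('g, 'b, 's) subst \<Rightarrow> nat" where
  "stretch_bound n Sub = (card (verts (Gam Sub)) * (n + 1) + card (verts (Gam' Sub))) ^ 2"

lemma gdist_transform_nbhd_le: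
  fixes Sub :: "('g, 'b, 's) subst" and G :: "(nat, 's) sgraph"
  assumes Sub: "valid_subst Sub" "connected_g (Gam Sub)"
    and resp: "\<And>H :: (nat, 's) sgraph. is_graph H \<Longrightarrow> applicable Sub \<psi> H \<Longrightarrow>
      connected_g (transform Sub \<psi> H)"
    and G: "in_GC n G" "applicable Sub \<psi> G"
    and ab: "a \<in> closed_nbhd G (\<psi> ` verts (Gam Sub)) - deleted Sub \<psi>"
      "b \<in> closed_nbhd G (\<psi> ` verts (Gam Sub)) - deleted Sub \<psi>"
  shows "gdist (transform Sub \<psi> G) (cls Sub \<psi> G a) (cls Sub \<psi> G b) \<le> enat (stretch_bound n Sub)"
proof -
  define P where "P = \<psi> ` verts (Gam Sub)"
  define B where "B = closed_nbhd G P"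
  define H where "H = induced G B"
  define TH where "TH = transform Sub \<psi> H"
  have G_graph: "is_graph G" and G_simple: "simple G"
    using G(1) unfolding in_GC_def is_graph_def by auto
  have PG: "P \<subseteq> verts G" unfolding P_def by (rule applicable_image_subset_verts[OF G(2)])
  have BG: "B \<subseteq> verts G" unfolding B_def by (rule closed_nbhd_subset_verts[OF G_simple PG])
  have PB: "P \<subseteq> B" unfolding B_def closed_nbhd_def by blast
  have "is_graph H" unfolding H_def B_def
    using is_graph_induced_closed_nbhd[OF G_graph PG] applicable_image_connected[OF Sub G(2)]
    unfolding P_def by blast
  moreover have "applicable Sub \<psi> H"
    unfolding H_def using applicable_induced[OF G(2)] PB unfolding P_def by blast
  ultimately have TH_conn: "connected_g TH" unfolding TH_def by (rule resp)
  have H_verts: "verts H = B" unfolding H_def induced_def by simp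
  have finTH: "finite (verts TH)"
    and cardTH: "card (verts TH) \<le> card (verts (Gam Sub)) * (n + 1) + card (verts (Gam' Sub))"
    using card_transform_closed_nbhd_le[OF Sub(1) G] unfolding TH_def H_def B_def P_def by auto
  have adj_TH: "adj TH \<subseteq> verts TH \<times> verts TH"
    unfolding TH_def transform_def Let_def by auto
  have cls_TH: "cls Sub \<psi> G v \<in> verts TH" if "v \<in> B - deleted Sub \<psi>" for v
    using cls_in_verts_transform[of v H] that H_verts unfolding TH_def cls_indep[of _ _ H _ G] by blast
  have ab_B: "a \<in> B - deleted Sub \<psi>" "b \<in> B - deleted Sub \<psi>"
    using ab unfolding B_def P_def by auto
  have "adj TH \<subseteq> adj (transform Sub \<psi> G)"
    unfolding TH_def by (rule adj_transform_mono) (use BG in \<open>auto simp: H_def induced_def\<close>)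
  then have "gdist (transform Sub \<psi> G) (cls Sub \<psi> G a) (cls Sub \<psi> G b)
      \<le> gdist TH (cls Sub \<psi> G a) (cls Sub \<psi> G b)"
    by (rule gdist_mono)
  also have "\<dots> \<le> enat (card (verts TH) ^ 2)"
    using gdist_le_card_squared[OF adj_TH TH_conn finTH cls_TH[OF ab_B(1)] cls_TH[OF ab_B(2)]] .
  also have "\<dots> \<le> enat (stretch_bound n Sub)"
    using cardTH unfolding stretch_bound_def by (simp add: power_mono)
  finally show ?thesis .
qed

lemma gdist_transform_le:
  fixes Sub :: "('g, 'b, 's) subst" and G :: "(nat, 's) sgraph"
  assumes Sub: "valid_subst Sub" "connected_g (Gam Sub)"
    and resp: "\<And>H :: (nat, 's) sgraph. is_graph H \<Longrightarrow> applicable Sub \<psi> H \<Longrightarrow>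
      connected_g (transform Sub \<psi> H)"
    and G: "in_GC n G" "applicable Sub \<psi> G"
    and xy: "x \<notin> deleted Sub \<psi>" "y \<notin> deleted Sub \<psi>"
  shows "gdist (transform Sub \<psi> G) (cls Sub \<psi> G x) (cls Sub \<psi> G y)
    \<le> gdist G x y + enat (stretch_bound n Sub)"
proof (cases "gdist G x y = \<infinity>")
  case False
  then obtain k where k: "gdist G x y = enat k" "(x, y) \<in> adj G ^^ k"
    by (rule gdist_attained)
  define P where "P = \<psi> ` verts (Gam Sub)"
  define c where "c = cls Sub \<psi> G"
  define d where "d = gdist (transform Sub \<psi> G)"
  have G_simple: "simple G" using G(1) unfolding in_GC_def is_graph_def by blast
  then have "sym (adj G)" unfolding simple_def by blast
  have D: "deleted Sub \<psi> \<subseteq> P" unfolding deleted_def P_def by blast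
  from relpow_avoiding_or_through_nbhd[OF \<open>sym (adj G)\<close> k(2), of P]
  consider (avoiding) "(x, y) \<in> Restr (adj G) (- P) ^^ k"
    | (through) a b i j where "a \<in> closed_nbhd G P" "b \<in> closed_nbhd G P" "i + j \<le> k"
        "(x, a) \<in> Restr (adj G) (- P) ^^ i" "(b, y) \<in> Restr (adj G) (- P) ^^ j"
    unfolding closed_nbhd_def by blast
  then show ?thesis
  proof cases
    case avoiding
    then have "gdist (transform Sub \<psi> G) (cls Sub \<psi> G x) (cls Sub \<psi> G y) \<le> enat k"
      using gdist_transform_avoiding_walk[OF Sub(1) G_simple] unfolding P_def by blast
    also have "\<dots> \<le> gdist G x y + enat (stretch_bound n Sub)" using k(1) by simp
    finally show ?thesis .
  next
    case through
    have "a \<notin> deleted Sub \<psi>" "b \<notin> deleted Sub \<psi>"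
      using relpow_Restr_endpoints[OF through(4)] relpow_Restr_endpoints[OF through(5)] xy D by auto
    then have middle: "d (c a) (c b) \<le> enat (stretch_bound n Sub)"
      using gdist_transform_nbhd_le[OF Sub resp G] through(1,2) unfolding c_def d_def P_def by blast
    have ends: "d (c x) (c a) \<le> enat i" "d (c b) (c y) \<le> enat j"
      using gdist_transform_avoiding_walk[OF Sub(1) G_simple] through(4,5)
      unfolding c_def d_def P_def by auto
    have "d (c x) (c y) \<le> d (c x) (c a) + d (c a) (c y)"
      unfolding d_def by (rule gdist_triangle)
    also have "\<dots> \<le> d (c x) (c a) + (d (c a) (c b) + d (c b) (c y))"
      unfolding d_def by (intro add_left_mono gdist_triangle)
    also have "\<dots> \<le> enat i + (enat (stretch_bound n Sub) + enat j)"
      using middle ends by (intro add_mono)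
    also have "\<dots> \<le> gdist G x y + enat (stretch_bound n Sub)"
      using k(1) through(3) by simp
    finally show ?thesis unfolding c_def d_def .
  qed
qed simp

lemma gdist_transform_le_grammar:
  fixes subs :: "('g, 'b, 's) subst list" and G :: "(nat, 's) sgraph"
  assumes "\<forall>i<length subs. valid_subst (subs ! i)" "local_grammar subs"
    "respects_connectivity subs"
    and "i < length subs" "in_GC n G" "applicable (subs ! i) \<psi> G"
    and "x \<notin> deleted (subs ! i) \<psi>" "y \<notin> deleted (subs ! i) \<psi>"
  shows "gdist (transform (subs ! i) \<psi> G) (cls (subs ! i) \<psi> G x) (cls (subs ! i) \<psi> G y)
    \<le> gdist G x y + enat (1 + sum_list (map (stretch_bound n) subs))"
proof -
  have "gdist (transform (subs ! i) \<psi> G) (cls (subs ! i) \<psi> G x) (cls (subs ! i) \<psi> G y)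
      \<le> gdist G x y + enat (stretch_bound n (subs ! i))"
    using assms by (intro gdist_transform_le) (auto simp: local_grammar_def respects_connectivity_def)
  also have "stretch_bound n (subs ! i) \<le> 1 + sum_list (map (stretch_bound n) subs)"
    using \<open>i < length subs\<close> by (intro trans_le_add2 member_le_sum_list) auto
  then have "gdist G x y + enat (stretch_bound n (subs ! i))
      \<le> gdist G x y + enat (1 + sum_list (map (stretch_bound n) subs))"
    by (intro add_left_mono) simp
  finally show ?thesis .
qed

text \<open>The estimate holds for every \<open>n\<close>.\<close>
theorem lemma2:
  fixes subs :: "('g, 'b, 's) subst list"
    and G0 :: "(nat, 's) sgraph"
  assumes "\<forall>i<length subs. valid_subst (subs ! i)"
    and "local_grammar subs"
    and "locally_bounded subs"
    and "respects_connectivity subs"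
  shows "\<exists>N. \<forall>n\<ge>N. in_GC n G0 \<longrightarrow>
           (\<exists>C::nat. C > 0 \<and>
             (\<forall>(G :: (nat, 's) sgraph) i \<psi> x y.
                in_GC n G \<and> i < length subs \<and> applicable (subs ! i) \<psi> G \<and>
                x \<in> verts G - deleted (subs ! i) \<psi> \<and> y \<in> verts G - deleted (subs ! i) \<psi> \<longrightarrow>
                gdist (transform (subs ! i) \<psi> G) (cls (subs ! i) \<psi> G x) (cls (subs ! i) \<psi> G y)
                  \<le> gdist G x y + enat C))"
  apply (rule exI[of _ 0], intro allI impI)
  subgoal for n
    using gdist_transform_le_grammar[OF assms(1,2,4), where n = n]
    by (intro exI[of _ "1 + sum_list (map (stretch_bound n) subs)"]) auto
  done

end
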